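(* Let $k\ge 0$ be an integer, let $G=(V,E)$ be a finite graph together with a finite family $\mathcal{C}$ of v-cliques such that $E$ consists exactly of the pairs of distinct nodes lying in a common member of $\mathcal{C}$. Let $G'$ be the graph obtained from $G$ by merging, for each $C\in\mathcal{C}$, all nodes that belong to $C$ and to no other member of $\mathcal{C}$ into a single node, and let $\pi:V\to V(G')$ be the merging map. Then for any two distinct nodes $u,v\in V$: $u$ and $v$ belong to the same $k$-core of $G$ if and only if they belong to the same $k$-core of $G'$.
   Context: A v-clique is a set of nodes inducing a complete subgraph. The merged graph $G'$ has node set $\pi(V)$, where $\pi$ identifies exactly those nodes whose set of containing v-cliques is a single common set $\{C\}$; two distinct nodes $x,y$ of $G'$ are adjacent iff some $u\in\pi^{-1}(x)$, $w\in\pi^{-1}(y)$ are adjacent in $G$. Each node $x$ of $G'$ is said to represent the $|\pi^{-1}(x)|$ nodes of $G$ mapped to it. A finite simple undirected graph $H$ is $k$-robust if, after removing arbitrary $k$ nodes and their incident edges, the remaining graph is still connected; a clique or a single node is $k$-robust for every $k$. A maximal $k$-robust partitioning of a graph $H$ is a partition of its node set into parts such that each node is in exactly one part, each part induces a $k$-robust subgraph, and the union of any two or more parts does not induce a $k$-robust subgraph. For a graph $H$, let $u\approx_H v$ mean that $u$ and $v$ lie in the same part in every maximal $k$-robust partitioning of $H$. In $G$, a $k$-core is an equivalence class of $\approx_G$ with at least $2$ nodes, and $u,v$ belong to the same $k$-core of $G$ iff they lie in a common such class. In $G'$, nodes are counted by the records they represent: a $k$-core of $G'$ is an equivalence class $X$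 of $\approx_{G'}$ with $|\pi^{-1}(X)|\ge 2$, and $u,v\in V$ belong to the same $k$-core of $G'$ iff $\pi(u),\pi(v)$ lie in a common such class (in particular this holds when $\pi(u)=\pi(v)$). *)

theory Defs
  imports Main
begin

text \<open>Graphs are given by a vertex set W and a symmetric irreflexive adjacency
  relation adj; induced subgraphs are given by vertex subsets.\<close>

definition is_clique :: "('v \<Rightarrow> 'v \<Rightarrow> bool) \<Rightarrow> 'v set \<Rightarrow> bool" where
  "is_clique adj S \<longleftrightarrow> (\<forall>x\<in>S. \<forall>y\<in>S. x \<noteq> y \<longrightarrow> adj x y)"

text \<open>The subgraph induced by T is connected (the empty graph counts as connected).\<close>
definition connected_on :: "('v \<Rightarrow> 'v \<Rightarrow> bool) \<Rightarrow> 'v set \<Rightarrow> bool" where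
  "connected_on adj T \<longleftrightarrow>
     (\<forall>x\<in>T. \<forall>y\<in>T. (\<lambda>a b. a \<in> T \<and> b \<in> T \<and> adj a b)\<^sup>*\<^sup>* x y)"

definition k_robust :: "('v \<Rightarrow> 'v \<Rightarrow> bool) \<Rightarrow> nat \<Rightarrow> 'v set \<Rightarrow> bool" where
  "k_robust adj k S \<longleftrightarrow>
     is_clique adj S \<or> (\<forall>R. R \<subseteq> S \<and> card R \<le> k \<longrightarrow> connected_on adj (S - R))"

definition max_robust_partitioning ::
    "('v \<Rightarrow> 'v \<Rightarrow> bool) \<Rightarrow> 'v set \<Rightarrow> nat \<Rightarrow> 'v set set \<Rightarrow> bool" where
  "max_robust_partitioning adj W k P \<longleftrightarrow>
     \<Union>P = W \<and> (\<forall>p\<in>P. p \<noteq> {}) \<and>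
     (\<forall>p\<in>P. \<forall>q\<in>P. p \<noteq> q \<longrightarrow> p \<inter> q = {}) \<and>
     (\<forall>p\<in>P. k_robust adj k p) \<and>
     (\<forall>Q. Q \<subseteq> P \<and> 2 \<le> card Q \<longrightarrow> \<not> k_robust adj k (\<Union>Q))"

definition robust_equiv :: "('v \<Rightarrow> 'v \<Rightarrow> bool) \<Rightarrow> 'v set \<Rightarrow> nat \<Rightarrow> 'v \<Rightarrow> 'v \<Rightarrow> bool" where
  "robust_equiv adj W k u v \<longleftrightarrow>
     u \<in> W \<and> v \<in> W \<and>
     (\<forall>P. max_robust_partitioning adj W k P \<longrightarrow> (\<exists>p\<in>P. u \<in> p \<and> v \<in> p))"

definition robust_class :: "('v \<Rightarrow> 'v \<Rightarrow> bool) \<Rightarrow> 'v set \<Rightarrow> nat \<Rightarrow> 'v \<Rightarrow> 'v set" where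
  "robust_class adj W k x = {z \<in> W. robust_equiv adj W k x z}"

definition clique_adj :: "'a set set \<Rightarrow> 'a \<Rightarrow> 'a \<Rightarrow> bool" where
  "clique_adj Cs u v \<longleftrightarrow> u \<noteq> v \<and> (\<exists>C\<in>Cs. u \<in> C \<and> v \<in> C)"

definition containing :: "'a set set \<Rightarrow> 'a \<Rightarrow> 'a set set" where
  "containing Cs u = {C \<in> Cs. u \<in> C}"

definition merge_map :: "'a set \<Rightarrow> 'a set set \<Rightarrow> 'a \<Rightarrow> 'a set" where
  "merge_map V Cs u =
     (if \<exists>C. containing Cs u = {C}
      then {w \<in> V. containing Cs w = containing Cs u} else {u})"

definition merged_adj :: "'a set \<Rightarrow> 'a set set \<Rightarrow> 'a set \<Rightarrow> 'a set \<Rightarrow> bool" where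
  "merged_adj V Cs x y \<longleftrightarrow> x \<noteq> y \<and>
     (\<exists>u\<in>V. \<exists>w\<in>V. merge_map V Cs u = x \<and> merge_map V Cs w = y \<and> clique_adj Cs u w)"

definition same_core_G :: "'a set \<Rightarrow> 'a set set \<Rightarrow> nat \<Rightarrow> 'a \<Rightarrow> 'a \<Rightarrow> bool" where
  "same_core_G V Cs k u v \<longleftrightarrow>
     (\<exists>x\<in>V. let X = robust_class (clique_adj Cs) V k x in
        2 \<le> card X \<and> u \<in> X \<and> v \<in> X)"

text \<open>u, v lie in a common k-core of G' (size counted by represented records).\<close>
definition same_core_merged :: "'a set \<Rightarrow> 'a set set \<Rightarrow> nat \<Rightarrow> 'a \<Rightarrow> 'a \<Rightarrow> bool" where
  "same_core_merged V Cs k u v \<longleftrightarrow>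
     (let \<pi> = merge_map V Cs; W = \<pi> ` V in
      \<exists>x\<in>W. let X = robust_class (merged_adj V Cs) W k x in
        2 \<le> card {w \<in> V. \<pi> w \<in> X} \<and> \<pi> u \<in> X \<and> \<pi> v \<in> X)"

end

theory Submission
  imports Defs
begin

text \<open>Nodes identified by \<pi> are twins: both lie in exactly one v-clique C, so each is
  adjacent to precisely the other nodes of C. Hence adjacency, cliques and connectivity of a set
  S \<subseteq> V correspond to those of \<pi> ` S, and deleting nodes behaves well too: a merged node that
  is deleted from \<pi> ` S only in part is simplicial in G', so it can be removed without loss of
  connectivity. Thus S is k-robust in G iff \<pi> ` S is k-robust in G'.

  A k-robust set containing a twin a \<in> C either lies inside C or meets C in at least k + 2
  nodes, so two k-robust sets containing twins of each other have a k-robust union. By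
  maximality every part of a maximal k-robust partitioning of G is a union of fibres of \<pi>;
  taking images and preimages is then a bijection between the maximal k-robust partitionings
  of G and of G', so the relation \<approx> of G is the pullback of that of G' along \<pi>, and the
  k-cores correspond.\<close>

lemma connected_on_path:
  assumes "connected_on adj T" "x \<in> T" "y \<in> T" "T \<subseteq> T'"
  shows "(\<lambda>a b. a \<in> T' \<and> b \<in> T' \<and> adj a b)\<^sup>*\<^sup>* x y"
proof -
  have "(\<lambda>a b. a \<in> T \<and> b \<in> T \<and> adj a b)\<^sup>*\<^sup>* x y"
    using assms(1-3) unfolding connected_on_def by blast
  then show ?thesis
    by (rule rtranclp_mono[THEN predicate2D, rotated]) (use assms(4) in auto)
qed

lemma rtranclp_map:
  assumes "r\<^sup>*\<^sup>* x y" "\<And>a b. r a b \<Longrightarrow> s\<^sup>*\<^sup>* (f a) (f b)"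
  shows "s\<^sup>*\<^sup>* (f x) (f y)"
  using assms(1) by induction (auto intro: rtranclp_trans assms(2))

lemma connected_on_Un:
  assumes "symp adj" "connected_on adj A" "connected_on adj B"
    and "a \<in> A" "b \<in> B" "a = b \<or> adj a b"
  shows "connected_on adj (A \<union> B)"
  unfolding connected_on_def
proof (intro ballI)
  let ?R = "\<lambda>x y. x \<in> A \<union> B \<and> y \<in> A \<union> B \<and> adj x y"
  have A: "?R\<^sup>*\<^sup>* x y" if "x \<in> A" "y \<in> A" for x y
    using connected_on_path[OF assms(2) that] by blast
  have B: "?R\<^sup>*\<^sup>* x y" if "x \<in> B" "y \<in> B" for x y
    using connected_on_path[OF assms(3) that] by blast
  have ab: "?R\<^sup>*\<^sup>* a b" and ba: "?R\<^sup>*\<^sup>* b a"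
    using assms(1,4-6) by (auto dest: sympD)
  fix x y assume "x \<in> A \<union> B" "y \<in> A \<union> B"
  then have "?R\<^sup>*\<^sup>* x a" and "?R\<^sup>*\<^sup>* a y"
    using A B ab ba assms(4,5) by (meson Un_iff rtranclp_trans)+
  then show "?R\<^sup>*\<^sup>* x y" by (rule rtranclp_trans)
qed

text \<open>A vertex is simplicial if its neighbours are pairwise adjacent; a walk through it can
  be shortcut, so deleting simplicial vertices preserves connectivity.\<close>

lemma connected_on_Diff_simplicial:
  assumes sym: "symp adj"
    and simplicial: "\<And>z y y'. z \<in> Z \<Longrightarrow> adj z y \<Longrightarrow> adj z y' \<Longrightarrow> y \<noteq> y' \<Longrightarrow> adj y y'"
    and conn: "connected_on adj T"
  shows "connected_on adj (T - Z)"
  unfolding connected_on_def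
proof (intro ballI)
  fix x y assume x: "x \<in> T - Z" and y: "y \<in> T - Z"
  let ?S = "\<lambda>a b. a \<in> T - Z \<and> b \<in> T - Z \<and> adj a b"
  have "(\<lambda>a b. a \<in> T \<and> b \<in> T \<and> adj a b)\<^sup>*\<^sup>* x y"
    using connected_on_path[OF conn] x y by blast
  then have "\<exists>y'\<in>T - Z. ?S\<^sup>*\<^sup>* x y' \<and> (y' = y \<or> y \<in> Z \<and> adj y y')"
  proof (induction rule: rtranclp_induct)
    case base
    then show ?case using x by blast
  next
    case (step z z')
    then obtain y' where y': "y' \<in> T - Z" "?S\<^sup>*\<^sup>* x y'" "y' = z \<or> z \<in> Z \<and> adj z y'"
      by blast
    have zz': "adj z z'" "adj z' z" "z' \<in> T" using step(2) sym by (auto dest: sympD)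
    show ?case
    proof (cases "z' = y'")
      case True
      then show ?thesis using y' by blast
    next
      case False
      have "adj y' z'"
        using y'(3) zz'(1) simplicial[of z y' z'] False by auto
      then show ?thesis
      proof (cases "z' \<in> Z")
        case True
        then show ?thesis using y' \<open>adj y' z'\<close> sym by (blast dest: sympD)
      next
        case False
        then have "?S\<^sup>*\<^sup>* x z'" using y' \<open>adj y' z'\<close> zz'(3)
          by (blast intro: rtranclp.rtrancl_into_rtrancl)
        then show ?thesis using False zz'(3) by blast
      qed
    qed
  qed
  then show "?S\<^sup>*\<^sup>* x y" using y by blast
qed

lemma is_clique_connected_on: "is_clique adj S \<Longrightarrow> connected_on adj S"
  unfolding connected_on_def is_clique_def
  by (metis (mono_tags, lifting) r_into_rtranclp rtranclp.rtrancl_refl)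

lemma k_robust_connected_on_Diff:
  assumes "k_robust adj k S" "finite R" "card R \<le> k"
  shows "connected_on adj (S - R)"
proof (cases "is_clique adj S")
  case True
  then have "is_clique adj (S - R)" unfolding is_clique_def by blast
  then show ?thesis by (rule is_clique_connected_on)
next
  case False
  have "card (R \<inter> S) \<le> k" using assms(2,3) by (meson card_mono inf_le1 le_trans)
  then have "connected_on adj (S - R \<inter> S)"
    using assms(1) False unfolding k_robust_def by blast
  moreover have "S - R \<inter> S = S - R" by blast
  ultimately show ?thesis by simp
qed

lemma containing_singletonD:
  assumes "containing Cs u = {C}"
  shows "C \<in> Cs" "u \<in> C" "\<And>E. E \<in> Cs \<Longrightarrow> u \<in> E \<Longrightarrow> E = C"
  using assms unfolding containing_def by blast+

lemma clique_adj_sole_clique: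
  assumes "containing Cs u = {C}" "clique_adj Cs u w"
  shows "w \<in> C"
proof -
  obtain E where "E \<in> Cs" "u \<in> E" "w \<in> E" using assms(2) unfolding clique_adj_def by blast
  then show ?thesis using containing_singletonD(3)[OF assms(1)] by blast
qed

lemma symp_clique_adj: "symp (clique_adj Cs)"
  unfolding symp_def clique_adj_def by blast

text \<open>If p \<subseteq> C fails, deleting the at most k nodes of C \<inter> p other than a would cut a, all of
  whose neighbours lie in C, off from the nodes of p outside C.\<close>

lemma k_robust_twin_clique:
  assumes rob: "k_robust (clique_adj Cs) k p" and a: "a \<in> p" and C: "containing Cs a = {C}"
  shows "p \<subseteq> C \<or> k + 2 \<le> card (C \<inter> p)"
proof (rule ccontr)
  assume neg: "\<not> (p \<subseteq> C \<or> k + 2 \<le> card (C \<inter> p))"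
  then obtain z where z: "z \<in> p" "z \<notin> C" by blast
  have "a \<in> C" using containing_singletonD(2)[OF C] .
  have "\<not> clique_adj Cs a z" using z clique_adj_sole_clique[OF C] by blast
  moreover have "a \<noteq> z" using \<open>a \<in> C\<close> z by blast
  ultimately have "\<not> is_clique (clique_adj Cs) p" using a z unfolding is_clique_def by blast
  then have conn: "connected_on (clique_adj Cs) (p - R)" if "R \<subseteq> p" "card R \<le> k" for R
    using rob that unfolding k_robust_def by blast
  let ?R = "C \<inter> p - {a}"
  have "card ?R = card (C \<inter> p) - 1" using a \<open>a \<in> C\<close> by (simp add: card_Diff_singleton)
  then have "card ?R \<le> k" using neg by linarith
  then have "connected_on (clique_adj Cs) (p - ?R)" using conn[of ?R] by blast
  moreover have "a \<in> p - ?R" "z \<in> p - ?R" using a z by auto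
  ultimately have "(\<lambda>x y. x \<in> p - ?R \<and> y \<in> p - ?R \<and> clique_adj Cs x y)\<^sup>*\<^sup>* a z"
    by (rule connected_on_path) simp
  then show False
  proof (cases rule: converse_rtranclpE)
    case base
    then show False using \<open>a \<in> C\<close> z by simp
  next
    case (step b)
    then have "b \<in> C" "b \<in> p - ?R" "clique_adj Cs a b"
      using clique_adj_sole_clique[OF C] by auto
    then show False by (auto simp: clique_adj_def)
  qed
qed

lemma twin_clique_meets_Diff:
  assumes "p \<subseteq> C \<or> k + 2 \<le> card (C \<inter> p)" "finite R" "card R \<le> k" "p - R \<noteq> {}"
  shows "C \<inter> p - R \<noteq> {}"
proof
  assume "C \<inter> p - R = {}"
  then have "p \<subseteq> C \<longrightarrow> p - R = {}" and "card (C \<inter> p) \<le> card R"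
    using card_mono[OF assms(2)] by auto
  then show False using assms by linarith
qed

lemma k_robust_Un_twins:
  assumes p: "k_robust (clique_adj Cs) k p" and q: "k_robust (clique_adj Cs) k q"
    and "finite (p \<union> q)" and "a \<in> p" "b \<in> q"
    and a: "containing Cs a = {C}" and b: "containing Cs b = {C}"
  shows "k_robust (clique_adj Cs) k (p \<union> q)"
proof -
  have tp: "p \<subseteq> C \<or> k + 2 \<le> card (C \<inter> p)" using k_robust_twin_clique[OF p \<open>a \<in> p\<close> a] .
  have tq: "q \<subseteq> C \<or> k + 2 \<le> card (C \<inter> q)" using k_robust_twin_clique[OF q \<open>b \<in> q\<close> b] .
  have "connected_on (clique_adj Cs) (p \<union> q - R)" if R: "R \<subseteq> p \<union> q" "card R \<le> k" for R
  proof -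
    have "finite R" using R(1) \<open>finite (p \<union> q)\<close> by (rule finite_subset)
    then have cp: "connected_on (clique_adj Cs) (p - R)" and cq: "connected_on (clique_adj Cs) (q - R)"
      using k_robust_connected_on_Diff[OF p] k_robust_connected_on_Diff[OF q] R(2) by simp_all
    show ?thesis
    proof (cases "p - R = {} \<or> q - R = {}")
      case True
      then have "p \<union> q - R = q - R \<or> p \<union> q - R = p - R" by blast
      then show ?thesis using cp cq by metis
    next
      case False
      then obtain x y where "x \<in> C \<inter> p - R" "y \<in> C \<inter> q - R"
        using twin_clique_meets_Diff[OF tp \<open>finite R\<close> R(2)]
          twin_clique_meets_Diff[OF tq \<open>finite R\<close> R(2)] by blast
      moreover have "C \<in> Cs" using containing_singletonD(1)[OF a] .
      ultimately have "x \<in> p - R" "y \<in> q - R" "x = y \<or> clique_adj Cs x y"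
        unfolding clique_adj_def by blast+
      then have "connected_on (clique_adj Cs) ((p - R) \<union> (q - R))"
        using connected_on_Un[OF symp_clique_adj cp cq] by blast
      then show ?thesis by (simp add: Un_Diff)
    qed
  qed
  then show ?thesis unfolding k_robust_def by simp
qed

locale clique_merging =
  fixes V :: "'a set" and Cs :: "'a set set"
  assumes finite_V: "finite V"
begin

abbreviation \<pi> :: "'a \<Rightarrow> 'a set" where "\<pi> \<equiv> merge_map V Cs"

definition represented :: "'a set set \<Rightarrow> 'a set" where
  "represented X = {w \<in> V. \<pi> w \<in> X}"

lemma merge_map_self: "u \<in> V \<Longrightarrow> u \<in> \<pi> u"
  by (auto simp: merge_map_def)

lemma merge_map_eq_twins:
  assumes "u \<in> V" "w \<in> V" "\<pi> u = \<pi> w" "u \<noteq> w"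
  obtains C where "containing Cs u = {C}" "containing Cs w = {C}"
proof -
  have "w \<in> \<pi> u" using merge_map_self assms(2,3) by simp
  then obtain C where C: "containing Cs u = {C}"
    using assms(4) unfolding merge_map_def by (auto split: if_splits)
  moreover from this have "containing Cs w = containing Cs u"
    using \<open>w \<in> \<pi> u\<close> unfolding merge_map_def by auto
  ultimately show ?thesis using that by simp
qed

lemma clique_adj_merged_twins:
  assumes "u \<in> V" "w \<in> V" "\<pi> u = \<pi> w" "u \<noteq> w"
  shows "clique_adj Cs u w"
proof -
  obtain C where u: "containing Cs u = {C}" and w: "containing Cs w = {C}"
    using merge_map_eq_twins[OF assms] .
  then have "C \<in> Cs" "u \<in> C" "w \<in> C"
    using containing_singletonD(1,2)[OF u] containing_singletonD(2)[OF w] by auto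
  then show ?thesis using assms(4) by (auto simp: clique_adj_def)
qed

lemma clique_adj_merge_map_cong:
  assumes "clique_adj Cs u' w" "u \<in> V" "u' \<in> V" "\<pi> u = \<pi> u'" "u \<noteq> w"
  shows "clique_adj Cs u w"
proof (cases "u = u'")
  case False
  then obtain C where C: "containing Cs u = {C}" "containing Cs u' = {C}"
    using merge_map_eq_twins[OF assms(2-4)] by blast
  have "w \<in> C" using clique_adj_sole_clique[OF C(2) assms(1)] .
  moreover have "C \<in> Cs" "u \<in> C" using containing_singletonD(1,2)[OF C(1)] by auto
  ultimately show ?thesis using assms(5) unfolding clique_adj_def by blast
qed (use assms(1) in blast)

lemma merged_adj_merge_map_iff:
  assumes "u \<in> V" "w \<in> V"
  shows "merged_adj V Cs (\<pi> u) (\<pi> w) \<longleftrightarrow> \<pi> u \<noteq> \<pi> w \<and> clique_adj Cs u w"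
proof
  assume "merged_adj V Cs (\<pi> u) (\<pi> w)"
  then obtain u' w' where uw': "u' \<in> V" "w' \<in> V" "\<pi> u = \<pi> u'" "\<pi> w = \<pi> w'"
    "clique_adj Cs u' w'" and ne: "\<pi> u \<noteq> \<pi> w"
    unfolding merged_adj_def by metis
  have "clique_adj Cs u w'"
    using clique_adj_merge_map_cong[OF uw'(5) assms(1) uw'(1,3)] ne uw'(4) by blast
  then have "clique_adj Cs w u"
    using clique_adj_merge_map_cong[OF _ assms(2) uw'(2,4)] ne sympD[OF symp_clique_adj[of Cs]]
    by blast
  then show "\<pi> u \<noteq> \<pi> w \<and> clique_adj Cs u w"
    using ne sympD[OF symp_clique_adj[of Cs]] by blast
qed (use assms in \<open>auto simp: merged_adj_def\<close>)

lemma merged_adj_in_image: "merged_adj V Cs X Y \<Longrightarrow> X \<in> \<pi> ` V \<and> Y \<in> \<pi> ` V"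
  unfolding merged_adj_def by blast

lemma symp_merged_adj: "symp (merged_adj V Cs)"
  using sympD[OF symp_clique_adj[of Cs]] unfolding symp_def merged_adj_def by blast

lemma merged_adj_twin_simplicial:
  assumes "u \<in> V" "containing Cs u = {C}"
    and "merged_adj V Cs (\<pi> u) Y" "merged_adj V Cs (\<pi> u) Y'" "Y \<noteq> Y'"
  shows "merged_adj V Cs Y Y'"
proof -
  obtain w w' where w: "w \<in> V" "Y = \<pi> w" "w' \<in> V" "Y' = \<pi> w'"
    using merged_adj_in_image[OF assms(3)] merged_adj_in_image[OF assms(4)] by blast
  have "clique_adj Cs u w" "clique_adj Cs u w'"
    using merged_adj_merge_map_iff assms w by auto
  then have "w \<in> C" "w' \<in> C" using clique_adj_sole_clique[OF assms(2)] by auto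
  moreover have "w \<noteq> w'" "C \<in> Cs" using w assms(5) containing_singletonD(1)[OF assms(2)] by auto
  ultimately have "clique_adj Cs w w'" unfolding clique_adj_def by blast
  then show ?thesis using merged_adj_merge_map_iff w assms(5) by auto
qed

lemma clique_path_of_merged_path:
  assumes T: "T \<subseteq> V" and x: "x \<in> T"
    and path: "(\<lambda>A B. A \<in> \<pi> ` T \<and> B \<in> \<pi> ` T \<and> merged_adj V Cs A B)\<^sup>*\<^sup>* (\<pi> x) Y"
  shows "z \<in> T \<Longrightarrow> \<pi> z = Y \<Longrightarrow> (\<lambda>a b. a \<in> T \<and> b \<in> T \<and> clique_adj Cs a b)\<^sup>*\<^sup>* x z"
  using path
proof (induction arbitrary: z rule: rtranclp_induct)
  case base
  moreover have "x \<in> V" "z \<in> V" using x T base by auto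
  ultimately have "x = z \<or> clique_adj Cs x z"
    using clique_adj_merged_twins by metis
  then show ?case using x base by auto
next
  case (step Y Z)
  obtain y where y: "y \<in> T" "Y = \<pi> y" using step(2) by blast
  have "clique_adj Cs y z"
    using step(2,4,5) y T merged_adj_merge_map_iff by (metis subsetD)
  then show ?case
    using step.IH y step(4) by (auto intro: rtranclp.rtrancl_into_rtrancl)
qed

lemma connected_on_merge_map_image:
  assumes T: "T \<subseteq> V"
  shows "connected_on (merged_adj V Cs) (\<pi> ` T) \<longleftrightarrow> connected_on (clique_adj Cs) T"
proof
  assume conn: "connected_on (merged_adj V Cs) (\<pi> ` T)"
  show "connected_on (clique_adj Cs) T"
    unfolding connected_on_def
  proof (intro ballI)
    fix x y assume "x \<in> T" "y \<in> T"
    then show "(\<lambda>a b. a \<in> T \<and> b \<in> T \<and> clique_adj Cs a b)\<^sup>*\<^sup>* x y"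
      using clique_path_of_merged_path[OF T] connected_on_path[OF conn] by blast
  qed
next
  let ?S = "\<lambda>A B. A \<in> \<pi> ` T \<and> B \<in> \<pi> ` T \<and> merged_adj V Cs A B"
  assume conn: "connected_on (clique_adj Cs) T"
  have edge: "?S\<^sup>*\<^sup>* (\<pi> a) (\<pi> b)" if "a \<in> T \<and> b \<in> T \<and> clique_adj Cs a b" for a b
    using that T merged_adj_merge_map_iff[of a b]
    by (cases "\<pi> a = \<pi> b") auto
  show "connected_on (merged_adj V Cs) (\<pi> ` T)"
    unfolding connected_on_def
  proof (intro ballI)
    fix X Y assume "X \<in> \<pi> ` T" "Y \<in> \<pi> ` T"
    then obtain x y where xy: "x \<in> T" "y \<in> T" "X = \<pi> x" "Y = \<pi> y" by blast
    show "?S\<^sup>*\<^sup>* X Y"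
      using rtranclp_map[OF connected_on_path[OF conn xy(1,2) subset_refl] edge] xy(3,4) by simp
  qed
qed

lemma is_clique_merge_map_image:
  assumes S: "S \<subseteq> V"
  shows "is_clique (merged_adj V Cs) (\<pi> ` S) \<longleftrightarrow> is_clique (clique_adj Cs) S"
proof
  assume cl: "is_clique (merged_adj V Cs) (\<pi> ` S)"
  show "is_clique (clique_adj Cs) S"
    unfolding is_clique_def
  proof (intro ballI impI)
    fix u w assume uw: "u \<in> S" "w \<in> S" "u \<noteq> w"
    then have "u \<in> V" "w \<in> V" using S by auto
    show "clique_adj Cs u w"
    proof (cases "\<pi> u = \<pi> w")
      case True
      then show ?thesis using clique_adj_merged_twins uw \<open>u \<in> V\<close> \<open>w \<in> V\<close> by blast
    next
      case False
      then have "merged_adj V Cs (\<pi> u) (\<pi> w)" using cl uw unfolding is_clique_def by blast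
      then show ?thesis using merged_adj_merge_map_iff \<open>u \<in> V\<close> \<open>w \<in> V\<close> by blast
    qed
  qed
next
  assume cl: "is_clique (clique_adj Cs) S"
  show "is_clique (merged_adj V Cs) (\<pi> ` S)"
    unfolding is_clique_def
  proof (intro ballI impI)
    fix X Y assume "X \<in> \<pi> ` S" "Y \<in> \<pi> ` S" "X \<noteq> Y"
    then obtain u w where uw: "u \<in> S" "w \<in> S" "X = \<pi> u" "Y = \<pi> w" "\<pi> u \<noteq> \<pi> w" by blast
    then have "clique_adj Cs u w" using cl unfolding is_clique_def by auto
    then show "merged_adj V Cs X Y" using uw S merged_adj_merge_map_iff by auto
  qed
qed

text \<open>A merged node of S that is only partly deleted survives in \<pi> ` (S - R), and being the
  image of a twin it is simplicial in G', so deleting it as well keeps G' connected.\<close>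

lemma connected_on_image_Diff_image:
  assumes S: "S \<subseteq> V" and "R \<subseteq> S" and conn: "connected_on (clique_adj Cs) (S - R)"
  shows "connected_on (merged_adj V Cs) (\<pi> ` S - \<pi> ` R)"
proof -
  let ?Z = "\<pi> ` (S - R) \<inter> \<pi> ` R"
  have "connected_on (merged_adj V Cs) (\<pi> ` (S - R))"
    using connected_on_merge_map_image S conn by (metis Diff_subset order_trans)
  moreover have "merged_adj V Cs Y Y'"
    if "Z \<in> ?Z" "merged_adj V Cs Z Y" "merged_adj V Cs Z Y'" "Y \<noteq> Y'" for Z Y Y'
  proof -
    obtain u r where ur: "u \<in> S - R" "r \<in> R" "Z = \<pi> u" "\<pi> u = \<pi> r"
      using \<open>Z \<in> ?Z\<close> by auto
    then have "u \<in> V" "r \<in> V" "u \<noteq> r" using S \<open>R \<subseteq> S\<close> by auto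
    then obtain C where "containing Cs u = {C}"
      using merge_map_eq_twins ur(4) by metis
    then show ?thesis
      using merged_adj_twin_simplicial \<open>u \<in> V\<close> ur(3) that(2-4) by blast
  qed
  ultimately have "connected_on (merged_adj V Cs) (\<pi> ` (S - R) - ?Z)"
    using connected_on_Diff_simplicial[OF symp_merged_adj] by blast
  moreover have "\<pi> ` (S - R) - ?Z = \<pi> ` S - \<pi> ` R" by auto
  ultimately show ?thesis by simp
qed

lemma k_robust_merge_map_image:
  assumes S: "S \<subseteq> V"
  shows "k_robust (merged_adj V Cs) k (\<pi> ` S) \<longleftrightarrow> k_robust (clique_adj Cs) k S"
proof -
  have finite_S: "finite S" using S finite_V by (rule finite_subset)
  have "(\<forall>R'. R' \<subseteq> \<pi> ` S \<and> card R' \<le> k \<longrightarrow> connected_on (merged_adj V Cs) (\<pi> ` S - R'))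
    \<longleftrightarrow> (\<forall>R. R \<subseteq> S \<and> card R \<le> k \<longrightarrow> connected_on (clique_adj Cs) (S - R))"
  proof (intro iffI allI impI)
    fix R assume H: "\<forall>R'. R' \<subseteq> \<pi> ` S \<and> card R' \<le> k \<longrightarrow> connected_on (merged_adj V Cs) (\<pi> ` S - R')"
      and R: "R \<subseteq> S \<and> card R \<le> k"
    let ?R' = "\<pi> ` R - \<pi> ` (S - R)"
    have finite_R: "finite R" using finite_S R finite_subset by blast
    have "card ?R' \<le> card (\<pi> ` R)" using finite_R by (simp add: card_mono)
    also have "\<dots> \<le> card R" using finite_R by (rule card_image_le)
    finally have "card ?R' \<le> k" using R by simp
    moreover have "?R' \<subseteq> \<pi> ` S" using R by auto
    ultimately have "connected_on (merged_adj V Cs) (\<pi> ` S - ?R')" using H by blast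
    moreover have "\<pi> ` S - ?R' = \<pi> ` (S - R)" by auto
    ultimately show "connected_on (clique_adj Cs) (S - R)"
      using connected_on_merge_map_image S by (metis Diff_subset order_trans)
  next
    fix R' assume H: "\<forall>R. R \<subseteq> S \<and> card R \<le> k \<longrightarrow> connected_on (clique_adj Cs) (S - R)"
      and R': "R' \<subseteq> \<pi> ` S \<and> card R' \<le> k"
    obtain R where R: "R \<subseteq> S" "inj_on \<pi> R" "R' = \<pi> ` R"
      using R' subset_image_inj by metis
    moreover have "card R \<le> k" using R' R(3) card_image[OF R(2)] by simp
    ultimately have "connected_on (clique_adj Cs) (S - R)" using H by blast
    then show "connected_on (merged_adj V Cs) (\<pi> ` S - R')"
      using connected_on_image_Diff_image S R by blast
  qed
  with is_clique_merge_map_image[OF S] show ?thesis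
    unfolding k_robust_def by simp
qed

lemma max_robust_partitioning_twins_same_part:
  assumes P: "max_robust_partitioning (clique_adj Cs) V k P"
    and "p \<in> P" "a \<in> p" "b \<in> V" "\<pi> a = \<pi> b"
  shows "b \<in> p"
proof (rule ccontr)
  assume "b \<notin> p"
  have cover: "\<Union>P = V" and robust: "\<And>p. p \<in> P \<Longrightarrow> k_robust (clique_adj Cs) k p"
    and maximal: "\<And>Q. Q \<subseteq> P \<Longrightarrow> 2 \<le> card Q \<Longrightarrow> \<not> k_robust (clique_adj Cs) k (\<Union>Q)"
    using P unfolding max_robust_partitioning_def by auto
  obtain q where "q \<in> P" "b \<in> q" using cover \<open>b \<in> V\<close> by blast
  have "p \<union> q \<subseteq> V" using cover \<open>p \<in> P\<close> \<open>q \<in> P\<close> by blast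
  moreover have "a \<noteq> b" using \<open>a \<in> p\<close> \<open>b \<notin> p\<close> by blast
  ultimately obtain C where "containing Cs a = {C}" "containing Cs b = {C}"
    using merge_map_eq_twins \<open>a \<in> p\<close> \<open>b \<in> V\<close> \<open>\<pi> a = \<pi> b\<close> by (metis Un_subset_iff subsetD)
  moreover have "finite (p \<union> q)" using \<open>p \<union> q \<subseteq> V\<close> finite_V by (rule finite_subset)
  ultimately have "k_robust (clique_adj Cs) k (\<Union>{p, q})"
    using k_robust_Un_twins[OF robust robust] \<open>p \<in> P\<close> \<open>q \<in> P\<close> \<open>a \<in> p\<close> \<open>b \<in> q\<close> by simp
  moreover have "p \<noteq> q" using \<open>b \<in> q\<close> \<open>b \<notin> p\<close> by blast
  ultimately show False
    using maximal[of "{p, q}"] \<open>p \<in> P\<close> \<open>q \<in> P\<close> by simp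
qed

lemma max_robust_partitioning_represented_image:
  assumes P: "max_robust_partitioning (clique_adj Cs) V k P" and "p \<in> P"
  shows "represented (\<pi> ` p) = p"
proof
  show "represented (\<pi> ` p) \<subseteq> p"
    using max_robust_partitioning_twins_same_part[OF P \<open>p \<in> P\<close>]
    unfolding represented_def by auto
  show "p \<subseteq> represented (\<pi> ` p)"
    using P \<open>p \<in> P\<close> unfolding max_robust_partitioning_def represented_def by auto
qed

lemma image_represented: "X \<subseteq> \<pi> ` V \<Longrightarrow> \<pi> ` represented X = X"
  unfolding represented_def by auto

lemma inj_on_represented: "inj_on represented (Pow (\<pi> ` V))"
  by (rule inj_on_inverseI[where g = "image \<pi>"]) (simp add: image_represented)

lemma Union_represented: "\<Union> (represented ` Q) = represented (\<Union>Q)"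
  unfolding represented_def by auto

lemma Int_represented: "represented X \<inter> represented Y = represented (X \<inter> Y)"
  unfolding represented_def by auto

lemma represented_subset: "represented X \<subseteq> V"
  unfolding represented_def by blast

lemma represented_eq_empty_iff:
  assumes "X \<subseteq> \<pi> ` V"
  shows "represented X = {} \<longleftrightarrow> X = {}"
proof
  assume "represented X = {}"
  then show "X = {}" using image_represented[OF assms] by simp
qed (simp add: represented_def)

lemma represented_eq_V_iff:
  assumes "X \<subseteq> \<pi> ` V"
  shows "represented X = V \<longleftrightarrow> X = \<pi> ` V"
proof
  assume "represented X = V"
  then show "X = \<pi> ` V" using image_represented[OF assms] by simp
qed (auto simp: represented_def)

lemma k_robust_represented_iff:
  assumes "X \<subseteq> \<pi> ` V"
  shows "k_robust (clique_adj Cs) k (represented X) \<longleftrightarrow> k_robust (merged_adj V Cs) k X"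
  using k_robust_merge_map_image[OF represented_subset[of X], of k] image_represented[OF assms]
  by metis

lemma card_represented_image: "Q \<subseteq> Pow (\<pi> ` V) \<Longrightarrow> card (represented ` Q) = card Q"
  by (rule card_image[OF inj_on_subset[OF inj_on_represented]])

lemma k_robust_Union_represented_iff:
  assumes "Q \<subseteq> Pow (\<pi> ` V)"
  shows "k_robust (clique_adj Cs) k (\<Union> (represented ` Q)) \<longleftrightarrow> k_robust (merged_adj V Cs) k (\<Union>Q)"
  unfolding Union_represented using assms by (intro k_robust_represented_iff) blast

lemma max_robust_partitioning_represented_iff:
  assumes P': "P' \<subseteq> Pow (\<pi> ` V)"
  shows "max_robust_partitioning (clique_adj Cs) V k (represented ` P')
    \<longleftrightarrow> max_robust_partitioning (merged_adj V Cs) (\<pi> ` V) k P'"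
proof -
  have parts: "X \<subseteq> \<pi> ` V" if "X \<in> P'" for X using P' that by blast
  have card: "card (represented ` Q) = card Q"
    and robust_Union: "k_robust (clique_adj Cs) k (\<Union> (represented ` Q)) \<longleftrightarrow> k_robust (merged_adj V Cs) k (\<Union>Q)"
    if "Q \<subseteq> P'" for Q
    using card_represented_image k_robust_Union_represented_iff order_trans[OF that P'] by blast+
  have "\<Union> (represented ` P') = V \<longleftrightarrow> \<Union>P' = \<pi> ` V"
  proof -
    have "\<Union>P' \<subseteq> \<pi> ` V" using parts by blast
    then show ?thesis unfolding Union_represented by (rule represented_eq_V_iff)
  qed
  moreover have "(\<forall>p\<in>represented ` P'. p \<noteq> {}) \<longleftrightarrow> (\<forall>X\<in>P'. X \<noteq> {})"
    by (simp add: represented_eq_empty_iff parts)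
  moreover have "(\<forall>p\<in>represented ` P'. \<forall>q\<in>represented ` P'. p \<noteq> q \<longrightarrow> p \<inter> q = {})
      \<longleftrightarrow> (\<forall>X\<in>P'. \<forall>Y\<in>P'. X \<noteq> Y \<longrightarrow> X \<inter> Y = {})"
  proof -
    have "represented X = represented Y \<longleftrightarrow> X = Y" if "X \<in> P'" "Y \<in> P'" for X Y
      by (rule inj_on_eq_iff[OF inj_on_represented]) (use P' that in auto)
    moreover have "represented X \<inter> represented Y = {} \<longleftrightarrow> X \<inter> Y = {}" if "X \<in> P'" for X Y
    proof -
      have "X \<inter> Y \<subseteq> \<pi> ` V" using parts[OF that] by blast
      then show ?thesis unfolding Int_represented by (rule represented_eq_empty_iff)
    qed
    ultimately show ?thesis by (simp only: ball_simps) metis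
  qed
  moreover have "(\<forall>p\<in>represented ` P'. k_robust (clique_adj Cs) k p) \<longleftrightarrow> (\<forall>X\<in>P'. k_robust (merged_adj V Cs) k X)"
    by (simp add: k_robust_represented_iff parts)
  moreover have "(\<forall>Q. Q \<subseteq> represented ` P' \<and> 2 \<le> card Q \<longrightarrow> \<not> k_robust (clique_adj Cs) k (\<Union>Q))
      \<longleftrightarrow> (\<forall>Q'. Q' \<subseteq> P' \<and> 2 \<le> card Q' \<longrightarrow> \<not> k_robust (merged_adj V Cs) k (\<Union>Q'))"
  proof (intro iffI allI impI)
    fix Q' assume "\<forall>Q. Q \<subseteq> represented ` P' \<and> 2 \<le> card Q \<longrightarrow> \<not> k_robust (clique_adj Cs) k (\<Union>Q)"
      and "Q' \<subseteq> P' \<and> 2 \<le> card Q'"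
    then show "\<not> k_robust (merged_adj V Cs) k (\<Union>Q')"
      using card robust_Union by (metis image_mono)
  next
    fix Q assume H: "\<forall>Q'. Q' \<subseteq> P' \<and> 2 \<le> card Q' \<longrightarrow> \<not> k_robust (merged_adj V Cs) k (\<Union>Q')"
      and "Q \<subseteq> represented ` P' \<and> 2 \<le> card Q"
    then obtain Q' where "Q' \<subseteq> P'" "Q = represented ` Q'" "2 \<le> card Q"
      by (auto simp: subset_image_iff)
    then show "\<not> k_robust (clique_adj Cs) k (\<Union>Q)"
      using H card robust_Union by metis
  qed
  ultimately show ?thesis unfolding max_robust_partitioning_def by presburger
qed

lemma robust_equiv_merge_map_iff:
  assumes "a \<in> V" "b \<in> V"
  shows "robust_equiv (merged_adj V Cs) (\<pi> ` V) k (\<pi> a) (\<pi> b) \<longleftrightarrow> robust_equiv (clique_adj Cs) V k a b"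
proof -
  have "(\<forall>P'. max_robust_partitioning (merged_adj V Cs) (\<pi> ` V) k P' \<longrightarrow> (\<exists>X\<in>P'. \<pi> a \<in> X \<and> \<pi> b \<in> X))
    \<longleftrightarrow> (\<forall>P. max_robust_partitioning (clique_adj Cs) V k P \<longrightarrow> (\<exists>p\<in>P. a \<in> p \<and> b \<in> p))"
  proof (intro iffI allI impI)
    fix P assume H: "\<forall>P'. max_robust_partitioning (merged_adj V Cs) (\<pi> ` V) k P' \<longrightarrow> (\<exists>X\<in>P'. \<pi> a \<in> X \<and> \<pi> b \<in> X)"
      and P: "max_robust_partitioning (clique_adj Cs) V k P"
    have represented_image: "represented ` image \<pi> ` P = P"
      using max_robust_partitioning_represented_image[OF P] by (simp add: image_image)
    have "image \<pi> ` P \<subseteq> Pow (\<pi> ` V)"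
      using P unfolding max_robust_partitioning_def by auto
    from max_robust_partitioning_represented_iff[OF this, of k] P
    have "max_robust_partitioning (merged_adj V Cs) (\<pi> ` V) k (image \<pi> ` P)"
      unfolding represented_image by blast
    then obtain p where p: "p \<in> P" "\<pi> a \<in> \<pi> ` p" "\<pi> b \<in> \<pi> ` p"
      using H by blast
    then have "a \<in> represented (\<pi> ` p)" "b \<in> represented (\<pi> ` p)"
      using assms unfolding represented_def by auto
    then show "\<exists>p\<in>P. a \<in> p \<and> b \<in> p"
      using max_robust_partitioning_represented_image[OF P p(1)] p(1) by auto
  next
    fix P' assume H: "\<forall>P. max_robust_partitioning (clique_adj Cs) V k P \<longrightarrow> (\<exists>p\<in>P. a \<in> p \<and> b \<in> p)"
      and P': "max_robust_partitioning (merged_adj V Cs) (\<pi> ` V) k P'"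
    have "\<Union>P' = \<pi> ` V" using P' unfolding max_robust_partitioning_def by simp
    then have "P' \<subseteq> Pow (\<pi> ` V)" by blast
    then have "max_robust_partitioning (clique_adj Cs) V k (represented ` P')"
      using max_robust_partitioning_represented_iff P' by simp
    then show "\<exists>X\<in>P'. \<pi> a \<in> X \<and> \<pi> b \<in> X"
      using H[rule_format] unfolding represented_def by auto
  qed
  then show ?thesis using assms unfolding robust_equiv_def by auto
qed

lemma robust_class_merge_map:
  assumes "x \<in> V"
  shows "robust_class (clique_adj Cs) V k x = represented (robust_class (merged_adj V Cs) (\<pi> ` V) k (\<pi> x))"
  using robust_equiv_merge_map_iff[OF assms] assms unfolding robust_class_def represented_def by auto

lemma same_core_G_iff_same_core_merged:
  assumes "u \<in> V" "v \<in> V"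
  shows "same_core_G V Cs k u v \<longleftrightarrow> same_core_merged V Cs k u v"
proof -
  let ?class = "robust_class (merged_adj V Cs) (\<pi> ` V) k"
  have "same_core_G V Cs k u v \<longleftrightarrow>
      (\<exists>x\<in>V. 2 \<le> card (represented (?class (\<pi> x))) \<and> \<pi> u \<in> ?class (\<pi> x) \<and> \<pi> v \<in> ?class (\<pi> x))"
    unfolding same_core_G_def Let_def
  proof (rule bex_cong[OF refl])
    fix x assume "x \<in> V"
    show "2 \<le> card (robust_class (clique_adj Cs) V k x) \<and> u \<in> robust_class (clique_adj Cs) V k x
        \<and> v \<in> robust_class (clique_adj Cs) V k x
      \<longleftrightarrow> 2 \<le> card (represented (?class (\<pi> x))) \<and> \<pi> u \<in> ?class (\<pi> x) \<and> \<pi> v \<in> ?class (\<pi> x)"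
      unfolding robust_class_merge_map[OF \<open>x \<in> V\<close>] using assms by (simp add: represented_def)
  qed
  also have "\<dots> \<longleftrightarrow> same_core_merged V Cs k u v"
    unfolding same_core_merged_def Let_def represented_def by blast
  finally show ?thesis .
qed

end

theorem theorem1:
  fixes V :: "'a set" and Cs :: "'a set set" and k :: nat and u v :: 'a
  assumes "finite V" and "finite Cs" and "\<forall>C\<in>Cs. C \<subseteq> V"
    and "u \<in> V" and "v \<in> V" and "u \<noteq> v"
  shows "same_core_G V Cs k u v \<longleftrightarrow> same_core_merged V Cs k u v"
proof -
  interpret clique_merging V Cs using assms(1) by unfold_locales
  show ?thesis using same_core_G_iff_same_core_merged[OF assms(4,5)] .
qed

end
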